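(* Let $\mathcal{C}$ be a finite set with $|\mathcal{C}|\ge2$ and let $\alpha=(\alpha_j)_{j\in\mathcal{C}}$ with $\alpha_j\in(0,1)$ rational and $\sum_j\alpha_j=1$. Then there exists an unbiased within-quota random roster for $\alpha$, i.e. a random map $\sigma:\{1,2,\dots\}\to\mathcal{C}$ such that, writing $N_j(l)=|\{k\le l:\sigma(k)=j\}|$, almost surely $\lfloor l\alpha_j\rfloor\le N_j(l)\le\lceil l\alpha_j\rceil$ for all $l\ge1$ and $j\in\mathcal{C}$, and $\mathbb{E}[N_j(l)]=l\alpha_j$ for all $l\ge1$ and $j\in\mathcal{C}$.
   Context: A roster is a map $\sigma:\{1,2,\dots\}\to\mathcal{C}$, interpreted as assigning the $k$-th position to category $\sigma(k)$. *)

theory Defs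
  imports "HOL-Probability.Probability"
begin

text \<open>A roster is a map from positions to categories; positions are 1,2,...
  (position 0 of the function is irrelevant). N_j(l) counts the positions
  k in {1..l} assigned to category j.\<close>

definition roster_count :: "(nat \<Rightarrow> 'c) \<Rightarrow> 'c \<Rightarrow> nat \<Rightarrow> nat" where
  "roster_count \<sigma> j l = card {k \<in> {1..l}. \<sigma> k = j}"

definition random_roster :: "(nat \<Rightarrow> 'c) measure \<Rightarrow> bool" where
  "random_roster M \<longleftrightarrow> prob_space M \<and>
     sets M = sets (PiM UNIV (\<lambda>_. count_space (UNIV :: 'c set)))"

definition unbiased_within_quota :: "('c \<Rightarrow> real) \<Rightarrow> (nat \<Rightarrow> 'c) measure \<Rightarrow> bool" where
  "unbiased_within_quota \<alpha> M \<longleftrightarrow> random_roster M \<and>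
     (AE \<sigma> in M. \<forall>l\<ge>1. \<forall>j.
        \<lfloor>real l * \<alpha> j\<rfloor> \<le> int (roster_count \<sigma> j l) \<and>
        int (roster_count \<sigma> j l) \<le> \<lceil>real l * \<alpha> j\<rceil>) \<and>
     (\<forall>l\<ge>1. \<forall>j. (\<integral>\<sigma>. real (roster_count \<sigma> j l) \<partial>M) = real l * \<alpha> j)"

end

theory Submission
  imports Defs
begin

text \<open>Write alpha_j = P_j / Q with positive integers. On the time axis scaled by Q P_j, position k
  (1 \<le> k \<le> Q) occupies the cell [(k-1) P_j, k P_j) and the n-th occurrence of j (1 \<le> n \<le> P_j)
  is due in the cell [(n-1) Q, n Q). The overlaps of these cells, divided by Q, form a doubly
  stochastic matrix between the Q positions and the Q slots (j, n). By Birkhoff's theorem (a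
  consequence of Hall's theorem) it is the marginal matrix of a random bijection from positions to
  slots that only uses overlapping pairs. Repeating this bijection periodically gives a roster in
  which the N-th occurrence of j lies at a position k with (k-1) alpha_j < N < k alpha_j + 1; this
  confines the counts between the floor and the ceiling of l alpha_j. A position shows j with
  probability equal to the total overlap of its cell with the cells of j, divided by Q, which is
  P_j / Q = alpha_j; so the roster is unbiased.\<close>

section \<open>Hall's marriage theorem\<close>

definition hall_condition :: "'b set \<Rightarrow> ('b \<Rightarrow> 'a set) \<Rightarrow> bool" where
  "hall_condition B N \<longleftrightarrow> (\<forall>T\<subseteq>B. card T \<le> card (\<Union>(N ` T)))"

lemma hall_condition_subset: "hall_condition B N \<Longrightarrow> T \<subseteq> B \<Longrightarrow> hall_condition T N"
  unfolding hall_condition_def by auto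

lemma hall_condition_remove:
  assumes fin: "finite B" "\<And>b. b \<in> B \<Longrightarrow> finite (N b)"
    and surplus: "\<And>T. T \<subseteq> B \<Longrightarrow> T \<noteq> {} \<Longrightarrow> T \<noteq> B \<Longrightarrow> card T < card (\<Union>(N ` T))"
    and b0: "b0 \<in> B"
  shows "hall_condition (B - {b0}) (\<lambda>b. N b - {a0})"
  unfolding hall_condition_def
proof (intro allI impI)
  fix T assume T: "T \<subseteq> B - {b0}"
  show "card T \<le> card (\<Union>b\<in>T. N b - {a0})"
  proof (cases "T = {}")
    case False
    have "finite T" using T fin(1) finite_subset by blast
    then have fin_rest: "finite (\<Union>b\<in>T. N b - {a0})" using T fin(2) by blast
    have "\<Union>(N ` T) \<subseteq> insert a0 (\<Union>b\<in>T. N b - {a0})" by auto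
    then have "card (\<Union>(N ` T)) \<le> card (insert a0 (\<Union>b\<in>T. N b - {a0}))"
      using fin_rest by (intro card_mono) auto
    also have "\<dots> \<le> Suc (card (\<Union>b\<in>T. N b - {a0}))"
      using fin_rest by (metis card_insert_if le_SucI order_refl)
    finally have "card (\<Union>(N ` T)) \<le> Suc (card (\<Union>b\<in>T. N b - {a0}))" .
    moreover have "card T < card (\<Union>(N ` T))" using surplus[of T] T b0 False by auto
    ultimately show ?thesis by linarith
  qed simp
qed

lemma hall_condition_outside_critical:
  assumes fin: "finite B" "\<And>b. b \<in> B \<Longrightarrow> finite (N b)"
    and hall: "hall_condition B N"
    and T: "T \<subseteq> B" "card (\<Union>(N ` T)) \<le> card T"
  shows "hall_condition (B - T) (\<lambda>b. N b - \<Union>(N ` T))"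
  unfolding hall_condition_def
proof (intro allI impI)
  fix T' assume T': "T' \<subseteq> B - T"
  define U where "U = \<Union>(N ` T)"
  have fin_T: "finite T" "finite T'" using T' T(1) fin(1) finite_subset by blast+
  have fin_U: "finite U" "finite (\<Union>b\<in>T'. N b - U)"
    using fin_T T' T(1) fin(2) unfolding U_def by blast+
  have "card T + card T' = card (T \<union> T')"
    using T' fin_T by (subst card_Un_disjoint) auto
  also have "\<dots> \<le> card (\<Union>(N ` (T \<union> T')))"
    using hall T' T(1) unfolding hall_condition_def by blast
  also have "\<Union>(N ` (T \<union> T')) = U \<union> (\<Union>b\<in>T'. N b - U)" by (auto simp: U_def)
  also have "card \<dots> = card U + card (\<Union>b\<in>T'. N b - U)"
    using fin_U by (subst card_Un_disjoint) auto
  finally show "card T' \<le> card (\<Union>b\<in>T'. N b - \<Union>(N ` T))"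
    using T(2) unfolding U_def by linarith
qed

theorem hall_marriage:
  assumes "finite B" "\<And>b. b \<in> B \<Longrightarrow> finite (N b)" "hall_condition B N"
  shows "\<exists>g. inj_on g B \<and> (\<forall>b\<in>B. g b \<in> N b)"
  using assms
proof (induction "card B" arbitrary: B N rule: less_induct)
  case less
  show ?case
  proof (cases "\<exists>T. T \<subseteq> B \<and> T \<noteq> {} \<and> T \<noteq> B \<and> card (\<Union>(N ` T)) \<le> card T")
    case True
    then obtain T where T: "T \<subseteq> B" "T \<noteq> {}" "T \<noteq> B" "card (\<Union>(N ` T)) \<le> card T"
      by blast
    define U where "U = \<Union>(N ` T)"
    have fin_T: "finite T" using T(1) less.prems(1) finite_subset by blast
    have "card T < card B" "card (B - T) < card B"
      using T less.prems(1) by (auto intro: psubset_card_mono)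
    obtain g1 where g1: "inj_on g1 T" "\<forall>b\<in>T. g1 b \<in> N b"
      using less.hyps[OF \<open>card T < card B\<close> fin_T less.prems(2)
          hall_condition_subset[OF less.prems(3) T(1)]] T(1) by blast
    obtain g2 where g2: "inj_on g2 (B - T)" "\<forall>b\<in>B - T. g2 b \<in> N b - U"
      using less.hyps[OF \<open>card (B - T) < card B\<close> _ _
          hall_condition_outside_critical[OF less.prems T(1,4)]] less.prems(1,2)
      unfolding U_def by blast
    have g1_U: "b \<in> T \<Longrightarrow> g1 b \<in> U" for b using g1(2) unfolding U_def by blast
    have g2_U: "b \<in> B - T \<Longrightarrow> g2 b \<notin> U" for b using g2(2) by blast
    define g where "g b = (if b \<in> T then g1 b else g2 b)" for b
    have "inj_on g B"
      unfolding inj_on_def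
    proof (intro ballI impI)
      fix b b' assume "b \<in> B" "b' \<in> B" "g b = g b'"
      then show "b = b'"
        using inj_onD[OF g1(1)] inj_onD[OF g2(1)] g1_U[of b] g1_U[of b'] g2_U[of b] g2_U[of b']
        by (cases "b \<in> T"; cases "b' \<in> T") (auto simp: g_def)
    qed
    moreover have "\<forall>b\<in>B. g b \<in> N b" using g1(2) g2(2) by (simp add: g_def)
    ultimately show ?thesis by blast
  next
    case False
    then have surplus: "card T < card (\<Union>(N ` T))" if "T \<subseteq> B" "T \<noteq> {}" "T \<noteq> B" for T
      using that by (meson not_le)
    show ?thesis
    proof (cases "B = {}")
      case False
      then obtain b0 where b0: "b0 \<in> B" by blast
      have "card {b0} \<le> card (\<Union>(N ` {b0}))"
        using less.prems(3) b0 unfolding hall_condition_def by (meson empty_subsetI insert_subset)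
      then obtain a0 where a0: "a0 \<in> N b0" by fastforce
      have "card (B - {b0}) < card B" using less.prems(1) b0 by (rule card_Diff1_less)
      then obtain g where g: "inj_on g (B - {b0})" "\<forall>b\<in>B - {b0}. g b \<in> N b - {a0}"
        using less.hyps[OF _ _ _ hall_condition_remove[OF less.prems(1,2) surplus b0]]
          less.prems(1,2) by blast
      have "inj_on (g(b0 := a0)) B" using g by (auto simp: inj_on_def)
      moreover have "\<forall>b\<in>B. (g(b0 := a0)) b \<in> N b" using g a0 by auto
      ultimately show ?thesis by blast
    qed simp
  qed
qed

section \<open>Birkhoff's theorem for random bijections\<close>

definition doubly_stochastic :: "'a set \<Rightarrow> 'b set \<Rightarrow> ('a \<Rightarrow> 'b \<Rightarrow> real) \<Rightarrow> bool" where
  "doubly_stochastic A B x \<longleftrightarrow> (\<forall>a b. 0 \<le> x a b) \<and>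
     (\<forall>a\<in>A. (\<Sum>b\<in>B. x a b) = 1) \<and> (\<forall>b\<in>B. (\<Sum>a\<in>A. x a b) = 1)"

lemma doubly_stochastic_nonneg: "doubly_stochastic A B x \<Longrightarrow> 0 \<le> x a b"
  unfolding doubly_stochastic_def by blast

lemma doubly_stochastic_card_eq:
  assumes "doubly_stochastic A B x"
  shows "card A = card B"
proof -
  have "real (card A) = (\<Sum>a\<in>A. \<Sum>b\<in>B. x a b)"
    using assms unfolding doubly_stochastic_def by simp
  also have "\<dots> = (\<Sum>b\<in>B. \<Sum>a\<in>A. x a b)" by (rule sum.swap)
  also have "\<dots> = real (card B)" using assms unfolding doubly_stochastic_def by simp
  finally show ?thesis by simp
qed

lemma doubly_stochastic_le_1:
  assumes "doubly_stochastic A B x" "finite A" "a \<in> A" "b \<in> B"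
  shows "x a b \<le> 1"
proof -
  have "x a b \<le> (\<Sum>a\<in>A. x a b)"
    using assms unfolding doubly_stochastic_def by (intro member_le_sum) auto
  then show ?thesis using assms unfolding doubly_stochastic_def by simp
qed

lemma doubly_stochastic_hall_condition:
  assumes ds: "doubly_stochastic A B x" and fin: "finite A" "finite B"
  shows "hall_condition B (\<lambda>b. {a \<in> A. 0 < x a b})"
  unfolding hall_condition_def
proof (intro allI impI)
  fix T assume T: "T \<subseteq> B"
  define U where "U = (\<Union>b\<in>T. {a \<in> A. 0 < x a b})"
  have nonneg: "0 \<le> x a b" for a b using ds by (rule doubly_stochastic_nonneg)
  have U: "U \<subseteq> A" unfolding U_def by blast
  have "real (card T) = (\<Sum>b\<in>T. \<Sum>a\<in>A. x a b)"
    using ds T unfolding doubly_stochastic_def by (simp add: subset_eq)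
  also have "\<dots> = (\<Sum>b\<in>T. \<Sum>a\<in>U. x a b)"
  proof (rule sum.cong[OF refl])
    fix b assume b: "b \<in> T"
    show "(\<Sum>a\<in>A. x a b) = (\<Sum>a\<in>U. x a b)"
    proof (rule sum.mono_neutral_right[OF fin(1) U], rule ballI)
      fix a assume "a \<in> A - U"
      then show "x a b = 0" using b nonneg[of a b] by (auto simp: U_def)
    qed
  qed
  also have "\<dots> = (\<Sum>a\<in>U. \<Sum>b\<in>T. x a b)" by (rule sum.swap)
  also have "\<dots> \<le> (\<Sum>a\<in>U. \<Sum>b\<in>B. x a b)"
    using nonneg by (intro sum_mono sum_mono2[OF fin(2) T]) auto
  also have "\<dots> = real (card U)"
    using ds U unfolding doubly_stochastic_def by (simp add: subset_eq)
  finally show "card T \<le> card (\<Union>b\<in>T. {a \<in> A. 0 < x a b})" by (simp add: U_def)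
qed

lemma doubly_stochastic_supported_bij:
  assumes ds: "doubly_stochastic A B x" and fin: "finite A" "finite B"
  obtains g where "bij_betw g B A" "\<And>b. b \<in> B \<Longrightarrow> 0 < x (g b) b"
proof -
  obtain g where g: "inj_on g B" "\<forall>b\<in>B. g b \<in> {a \<in> A. 0 < x a b}"
    using hall_marriage[OF fin(2) _ doubly_stochastic_hall_condition[OF ds fin]] fin(1) by auto
  have "g ` B \<subseteq> A" using g(2) by blast
  moreover have "card (g ` B) = card A"
    using card_image[OF g(1)] doubly_stochastic_card_eq[OF ds] by simp
  ultimately have "g ` B = A" using fin(1) by (simp add: card_subset_eq)
  then show ?thesis using that g by (auto simp: bij_betw_def)
qed

lemma doubly_stochastic_column_concentrated:
  assumes ds: "doubly_stochastic A B x" and "finite A" "b \<in> B"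
    and a0: "a0 \<in> A" "x a0 b = 1" and a: "a \<in> A" "a \<noteq> a0"
  shows "x a b = 0"
proof -
  have "1 = x a0 b + (\<Sum>a\<in>A - {a0}. x a b)"
    using ds assms(2,3) a0(1) unfolding doubly_stochastic_def by (metis sum.remove)
  then have "(\<Sum>a\<in>A - {a0}. x a b) = 0" using a0(2) by simp
  then show ?thesis
    using a assms(2) doubly_stochastic_nonneg[OF ds] by (simp add: sum_nonneg_eq_0_iff)
qed

definition perm_matrix :: "'b set \<Rightarrow> ('b \<Rightarrow> 'a) \<Rightarrow> 'a \<Rightarrow> 'b \<Rightarrow> real" where
  "perm_matrix B g a b = (if b \<in> B \<and> a = g b then 1 else 0)"

lemma sum_perm_matrix:
  assumes "finite A" "b \<in> B" "g b \<in> A"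
  shows "(\<Sum>a\<in>A \<inter> S. perm_matrix B g a b) = indicator S (g b)"
  using assms by (simp add: perm_matrix_def indicator_def)

lemma doubly_stochastic_perm_matrix:
  assumes "finite A" "bij_betw g B A"
  shows "doubly_stochastic A B (perm_matrix B g)"
  unfolding doubly_stochastic_def
proof (intro conjI ballI allI)
  fix a assume a: "a \<in> A"
  have "(\<Sum>b\<in>B. perm_matrix B g a b) = (\<Sum>b\<in>B. (\<lambda>a'. if a = a' then 1 else 0) (g b))"
    by (intro sum.cong) (auto simp: perm_matrix_def)
  also have "\<dots> = (\<Sum>a'\<in>A. if a = a' then 1 else 0)"
    by (rule sum.reindex_bij_betw[OF assms(2)])
  finally show "(\<Sum>b\<in>B. perm_matrix B g a b) = 1" using a assms(1) by simp
next
  fix b assume "b \<in> B"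
  then show "(\<Sum>a\<in>A. perm_matrix B g a b) = 1"
    using sum_perm_matrix[of A b B g UNIV] assms by (simp add: bij_betw_apply)
qed (simp add: perm_matrix_def)

lemma doubly_stochastic_peel:
  assumes "doubly_stochastic A B x" "doubly_stochastic A B y" "l < 1"
    and le: "\<And>a b. l * y a b \<le> x a b"
  shows "doubly_stochastic A B (\<lambda>a b. (x a b - l * y a b) / (1 - l))"
  using assms unfolding doubly_stochastic_def
  by (simp add: le sum_divide_distrib[symmetric] sum_subtractf sum_distrib_left[symmetric])

definition has_marginals :: "('b \<Rightarrow> 'a) pmf \<Rightarrow> 'a set \<Rightarrow> 'b set \<Rightarrow> ('a \<Rightarrow> 'b \<Rightarrow> real) \<Rightarrow> bool" where
  "has_marginals p A B x \<longleftrightarrow>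
     (\<forall>b\<in>B. \<forall>S. measure_pmf.prob p {g. g b \<in> S} = (\<Sum>a\<in>A \<inter> S. x a b))"

lemma has_marginals_cong:
  assumes "\<And>a b. a \<in> A \<Longrightarrow> b \<in> B \<Longrightarrow> x a b = y a b"
  shows "has_marginals p A B x \<longleftrightarrow> has_marginals p A B y"
proof -
  have "b \<in> B \<Longrightarrow> (\<Sum>a\<in>A \<inter> S. x a b) = (\<Sum>a\<in>A \<inter> S. y a b)" for b S
    using assms by (intro sum.cong) auto
  then show ?thesis unfolding has_marginals_def by simp
qed

lemma has_marginals_return_perm:
  assumes "finite A" "g ` B \<subseteq> A"
  shows "has_marginals (return_pmf g) A B (perm_matrix B g)"
  unfolding has_marginals_def
proof (intro ballI allI)
  fix b S assume b: "b \<in> B"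
  then have "g b \<in> A" using assms(2) by blast
  then show "measure_pmf.prob (return_pmf g) {h. h b \<in> S} = (\<Sum>a\<in>A \<inter> S. perm_matrix B g a b)"
    using sum_perm_matrix[OF assms(1) b] by (simp add: indicator_def)
qed

lemma measure_pmf_prob_bernoulli_bind:
  assumes "0 \<le> l" "l \<le> 1"
  shows "measure_pmf.prob (bind_pmf (bernoulli_pmf l) (\<lambda>c. if c then p else q)) X
         = l * measure_pmf.prob p X + (1 - l) * measure_pmf.prob q X"
proof -
  have "emeasure (bind_pmf (bernoulli_pmf l) (\<lambda>c. if c then p else q)) X
        = emeasure p X * ennreal l + emeasure q X * ennreal (1 - l)"
    using assms by simp
  also have "\<dots> = ennreal (l * measure_pmf.prob p X + (1 - l) * measure_pmf.prob q X)"
    using assms by (simp add: measure_pmf.emeasure_eq_measure ennreal_mult' ennreal_plus mult.commute)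
  finally have "ennreal (measure_pmf.prob (bind_pmf (bernoulli_pmf l) (\<lambda>c. if c then p else q)) X)
      = ennreal (l * measure_pmf.prob p X + (1 - l) * measure_pmf.prob q X)"
    by (simp only: measure_pmf.emeasure_eq_measure)
  then show ?thesis using assms by (subst (asm) ennreal_inj) auto
qed

lemma has_marginals_mix:
  assumes "has_marginals p A B y" "has_marginals q A B z" "0 \<le> l" "l \<le> 1"
  shows "has_marginals (bind_pmf (bernoulli_pmf l) (\<lambda>c. if c then p else q)) A B
           (\<lambda>a b. l * y a b + (1 - l) * z a b)"
  using assms unfolding has_marginals_def
  by (simp add: measure_pmf_prob_bernoulli_bind sum.distrib sum_distrib_left)

lemma has_marginals_pos:
  assumes "has_marginals p A B x" "g \<in> set_pmf p" "b \<in> B" "g b \<in> A"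
  shows "0 < x (g b) b"
proof -
  have "0 < measure_pmf.prob p {h. h b \<in> {g b}}"
    using assms(2) by (rule measure_pmf_posI) simp
  also have "\<dots> = (\<Sum>a\<in>A \<inter> {g b}. x a b)"
    using assms(1,3) unfolding has_marginals_def by blast
  also have "\<dots> = x (g b) b" using assms(4) by (simp add: Int_absorb1)
  finally show ?thesis .
qed

theorem birkhoff_random_bij:
  assumes fin: "finite A" "finite B" and "doubly_stochastic A B x"
  shows "\<exists>p. (\<forall>g\<in>set_pmf p. bij_betw g B A) \<and> has_marginals p A B x"
  using assms(3)
proof (induction "card {(a, b) \<in> A \<times> B. x a b \<noteq> 0}" arbitrary: x rule: less_induct)
  case less
  obtain g where g: "bij_betw g B A" "\<And>b. b \<in> B \<Longrightarrow> 0 < x (g b) b"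
    using doubly_stochastic_supported_bij[OF less.prems fin] by blast
  have gA: "g b \<in> A" if "b \<in> B" for b using g(1) that by (rule bij_betw_apply)
  have nonneg: "0 \<le> x a b" for a b using less.prems by (rule doubly_stochastic_nonneg)
  show ?case
  proof (cases "\<forall>b\<in>B. x (g b) b = 1")
    case True
    have "x a b = perm_matrix B g a b" if "a \<in> A" "b \<in> B" for a b
      using doubly_stochastic_column_concentrated[OF less.prems fin(1) \<open>b \<in> B\<close> gA]
        True that by (auto simp: perm_matrix_def)
    moreover have "has_marginals (return_pmf g) A B (perm_matrix B g)"
      using gA by (intro has_marginals_return_perm[OF fin(1)]) auto
    ultimately have "has_marginals (return_pmf g) A B x"
      by (subst has_marginals_cong)
    then show ?thesis using g(1) by (intro exI[of _ "return_pmf g"]) simp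
  next
    case False
    then obtain b0 where b0: "b0 \<in> B" "x (g b0) b0 \<noteq> 1" by blast
    have "x (g b0) b0 \<le> 1" using doubly_stochastic_le_1[OF less.prems fin(1) gA b0(1)] b0(1) .
    define l where "l = Min ((\<lambda>b. x (g b) b) ` B)"
    have l_le: "l \<le> x (g b) b" if "b \<in> B" for b using fin(2) that by (simp add: l_def)
    have "l \<in> (\<lambda>b. x (g b) b) ` B" unfolding l_def using fin(2) b0(1) by (intro Min_in) auto
    then obtain b1 where b1: "b1 \<in> B" "x (g b1) b1 = l" by auto
    have l: "0 < l" "l < 1"
      using g(2)[OF b1(1)] b1(2) l_le[OF b0(1)] b0(2) \<open>x (g b0) b0 \<le> 1\<close> by linarith+
    define x' where "x' = (\<lambda>a b. (x a b - l * perm_matrix B g a b) / (1 - l))"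
    have "l * perm_matrix B g a b \<le> x a b" for a b
      using l_le nonneg by (simp add: perm_matrix_def)
    then have ds': "doubly_stochastic A B x'"
      unfolding x'_def
      by (rule doubly_stochastic_peel[OF less.prems doubly_stochastic_perm_matrix[OF fin(1) g(1)] l(2)])
    \<comment> \<open>Subtracting l times the permutation matrix of g kills the entry at (g b1, b1).\<close>
    have supp: "{(a, b) \<in> A \<times> B. x' a b \<noteq> 0} \<subset> {(a, b) \<in> A \<times> B. x a b \<noteq> 0}"
    proof
      have "x a b \<noteq> 0" if "x' a b \<noteq> 0" for a b
        using that l l_le[of b] by (cases "b \<in> B \<and> a = g b") (auto simp: x'_def perm_matrix_def)
      then show "{(a, b) \<in> A \<times> B. x' a b \<noteq> 0} \<subseteq> {(a, b) \<in> A \<times> B. x a b \<noteq> 0}" by auto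
      have "(g b1, b1) \<notin> {(a, b) \<in> A \<times> B. x' a b \<noteq> 0}"
        using b1 l by (simp add: x'_def perm_matrix_def)
      moreover have "(g b1, b1) \<in> {(a, b) \<in> A \<times> B. x a b \<noteq> 0}"
        using b1 l gA by simp
      ultimately show "{(a, b) \<in> A \<times> B. x' a b \<noteq> 0} \<noteq> {(a, b) \<in> A \<times> B. x a b \<noteq> 0}"
        by blast
    qed
    have "finite {(a, b) \<in> A \<times> B. x a b \<noteq> 0}"
      by (rule finite_subset[of _ "A \<times> B"]) (use fin in auto)
    then have "card {(a, b) \<in> A \<times> B. x' a b \<noteq> 0} < card {(a, b) \<in> A \<times> B. x a b \<noteq> 0}"
      using supp by (rule psubset_card_mono)
    then have "\<exists>p'. (\<forall>g\<in>set_pmf p'. bij_betw g B A) \<and> has_marginals p' A B x'"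
      using ds' by (rule less.hyps)
    then obtain p' where p': "\<forall>g\<in>set_pmf p'. bij_betw g B A" "has_marginals p' A B x'"
      by blast
    define p where "p = bind_pmf (bernoulli_pmf l) (\<lambda>c. if c then return_pmf g else p')"
    have "has_marginals p A B (\<lambda>a b. l * perm_matrix B g a b + (1 - l) * x' a b)"
      unfolding p_def using l gA
      by (intro has_marginals_mix has_marginals_return_perm[OF fin(1)] p'(2)) auto
    moreover have "(\<lambda>a b. l * perm_matrix B g a b + (1 - l) * x' a b) = x"
      using l by (simp add: x'_def)
    moreover have "set_pmf p \<subseteq> insert g (set_pmf p')"
      unfolding p_def by (auto split: if_splits)
    ultimately show ?thesis using g(1) p'(1) by (intro exI[of _ p]) auto
  qed
qed

section \<open>Rational weights and the overlap matrix\<close>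

lemma rational_weights_common_denominator:
  fixes \<alpha> :: "'c::finite \<Rightarrow> real"
  assumes "\<And>j. \<alpha> j \<in> \<rat>" "\<And>j. 0 < \<alpha> j"
  obtains Q :: nat and P :: "'c \<Rightarrow> nat"
  where "0 < Q" "\<And>j. 0 < P j" "\<And>j. \<alpha> j = real (P j) / real Q"
proof -
  have "\<exists>f :: int \<times> int. 0 < snd f \<and> \<alpha> j = of_int (fst f) / of_int (snd f)" for j
  proof -
    obtain a b :: int where "0 < b" "\<alpha> j = of_int a / of_int b"
      using Rats_cases'[OF assms(1)] by metis
    then show ?thesis by (intro exI[of _ "(a, b)"]) simp
  qed
  then obtain f :: "'c \<Rightarrow> int \<times> int" where
    f: "\<And>j. 0 < snd (f j)" "\<And>j. \<alpha> j = of_int (fst (f j)) / of_int (snd (f j))"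
    by metis
  define D where "D = (\<Prod>j\<in>UNIV. snd (f j))"
  define m where "m j = fst (f j) * (\<Prod>i\<in>UNIV - {j}. snd (f i))" for j
  have D: "0 < D" unfolding D_def using f(1) by (simp add: prod_pos)
  have m: "\<alpha> j * of_int D = of_int (m j)" for j
  proof -
    have "D = snd (f j) * (\<Prod>i\<in>UNIV - {j}. snd (f i))" unfolding D_def by (simp add: prod.remove)
    then show ?thesis using f(1)[of j] f(2)[of j] by (simp add: m_def field_simps)
  qed
  have m_pos: "0 < m j" for j
    using m[of j] assms(2)[of j] D by (metis of_int_0_less_iff zero_less_mult_iff of_int_pos)
  show ?thesis
  proof (rule that[of "nat D" "\<lambda>j. nat (m j)"])
    fix j
    show "\<alpha> j = real (nat (m j)) / real (nat D)"
      using m[of j] m_pos[of j] D by (simp add: field_simps)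
  qed (use D m_pos in auto)
qed

definition cell :: "nat \<Rightarrow> nat \<Rightarrow> nat set" where
  "cell p k = {(k - 1) * p..<k * p}"

lemma card_cell: "1 \<le> k \<Longrightarrow> card (cell p k) = p"
  by (simp add: cell_def diff_mult_distrib)

lemma sum_card_cell_Int: "(\<Sum>k\<in>{1..N}. card (cell p k \<inter> S)) = card ({0..<N * p} \<inter> S)"
proof (induction N)
  case (Suc N)
  have "{0..<Suc N * p} \<inter> S = ({0..<N * p} \<inter> S) \<union> (cell p (Suc N) \<inter> S)"
    by (auto simp: cell_def)
  then have "card ({0..<Suc N * p} \<inter> S) = card ({0..<N * p} \<inter> S) + card (cell p (Suc N) \<inter> S)"
    by (simp add: card_Un_disjoint disjoint_iff cell_def)
  then show ?case using Suc by simp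
qed simp

lemma sum_card_cell_Int_cell:
  assumes "1 \<le> n" "n * q \<le> N * p"
  shows "(\<Sum>k\<in>{1..N}. card (cell p k \<inter> cell q n)) = q"
proof -
  have "{0..<N * p} \<inter> cell q n = cell q n" using assms(2) by (auto simp: cell_def)
  then show ?thesis using sum_card_cell_Int[where S = "cell q n"] card_cell[OF assms(1)] by simp
qed

lemma cell_Int_nonempty:
  "cell p k \<inter> cell q n \<noteq> {} \<Longrightarrow> (k - 1) * p < n * q \<and> (n - 1) * q < k * p"
  by (auto simp: cell_def)

definition slots :: "('c \<Rightarrow> nat) \<Rightarrow> ('c \<times> nat) set" where
  "slots P = (SIGMA j:UNIV. {1..P j})"

lemma finite_slots: "finite (slots (P :: 'c::finite \<Rightarrow> nat))"
  by (simp add: slots_def)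

definition overlap :: "nat \<Rightarrow> ('c \<Rightarrow> nat) \<Rightarrow> 'c \<times> nat \<Rightarrow> nat \<Rightarrow> real" where
  "overlap Q P s k = real (card (cell (P (fst s)) k \<inter> cell Q (snd s))) / real Q"

lemma sum_overlap_category:
  assumes "k \<in> {1..Q}"
  shows "(\<Sum>n\<in>{1..P j}. overlap Q P (j, n) k) = real (P j) / real Q"
proof -
  have "(\<Sum>n\<in>{1..P j}. card (cell Q n \<inter> cell (P j) k)) = P j"
    using assms by (intro sum_card_cell_Int_cell) (auto simp: mult.commute)
  moreover have "(\<Sum>n\<in>{1..P j}. overlap Q P (j, n) k)
      = real (\<Sum>n\<in>{1..P j}. card (cell Q n \<inter> cell (P j) k)) / real Q"
    by (simp add: overlap_def sum_divide_distrib Int_commute)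
  ultimately show ?thesis by simp
qed

lemma doubly_stochastic_overlap:
  fixes P :: "'c::finite \<Rightarrow> nat"
  assumes "0 < Q" "(\<Sum>j\<in>UNIV. P j) = Q"
  shows "doubly_stochastic (slots P) {1..Q} (overlap Q P)"
  unfolding doubly_stochastic_def
proof (intro conjI ballI allI)
  fix s assume "s \<in> slots P"
  then obtain j n where s: "s = (j, n)" "1 \<le> n" "n \<le> P j" by (auto simp: slots_def)
  have "(\<Sum>k\<in>{1..Q}. card (cell (P j) k \<inter> cell Q n)) = Q"
    using s by (intro sum_card_cell_Int_cell) (auto simp: mult.commute)
  then have "real (\<Sum>k\<in>{1..Q}. card (cell (P j) k \<inter> cell Q n)) / real Q = 1"
    using assms(1) by simp
  then show "(\<Sum>k\<in>{1..Q}. overlap Q P s k) = 1"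
    by (simp add: s overlap_def sum_divide_distrib)
next
  fix k assume k: "k \<in> {1..Q}"
  have "(\<Sum>s\<in>slots P. overlap Q P s k) = (\<Sum>j\<in>UNIV. \<Sum>n\<in>{1..P j}. overlap Q P (j, n) k)"
    unfolding slots_def by (simp add: sum.Sigma)
  also have "\<dots> = (\<Sum>j\<in>UNIV. real (P j) / real Q)"
    using k by (intro sum.cong refl sum_overlap_category)
  also have "\<dots> = 1" using assms by (simp flip: sum_divide_distrib of_nat_sum)
  finally show "(\<Sum>s\<in>slots P. overlap Q P s k) = 1" .
qed (simp add: overlap_def)

lemma has_marginals_overlap_category:
  assumes "has_marginals p (slots P) {1..Q} (overlap Q P)" "k \<in> {1..Q}"
  shows "measure_pmf.prob p {g. fst (g k) = j} = real (P j) / real Q"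
proof -
  have "measure_pmf.prob p {g. fst (g k) = j} = measure_pmf.prob p {g. g k \<in> {s. fst s = j}}"
    by simp
  also have "\<dots> = (\<Sum>s\<in>slots P \<inter> {s. fst s = j}. overlap Q P s k)"
    using assms unfolding has_marginals_def by blast
  also have "slots P \<inter> {s. fst s = j} = Pair j ` {1..P j}" by (auto simp: slots_def)
  also have "(\<Sum>s\<in>Pair j ` {1..P j}. overlap Q P s k) = (\<Sum>n\<in>{1..P j}. overlap Q P (j, n) k)"
    by (simp add: sum.reindex inj_on_def)
  also have "\<dots> = real (P j) / real Q" using assms(2) by (rule sum_overlap_category)
  finally show ?thesis .
qed

section \<open>Periodic rosters\<close>

definition phase :: "nat \<Rightarrow> nat \<Rightarrow> nat" where
  "phase Q k = (k - 1) mod Q + 1"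

lemma phase_in_period: "0 < Q \<Longrightarrow> phase Q k \<in> {1..Q}"
  by (simp add: phase_def Suc_leI)

lemma phase_decomp: "1 \<le> k \<Longrightarrow> k = (k - 1) div Q * Q + phase Q k"
  unfolding phase_def using div_mult_mod_eq[of "k - 1" Q] by linarith

lemma phase_shift:
  assumes "r \<in> {1..Q}"
  shows "phase Q (a * Q + r) = r" "(a * Q + r - 1) div Q = a"
proof -
  obtain r' where "r = Suc r'" "r' < Q" using assms by (cases r) auto
  then show "phase Q (a * Q + r) = r" "(a * Q + r - 1) div Q = a"
    by (simp_all add: phase_def)
qed

lemma period_shift_window:
  fixes a r n p q :: nat
  assumes "1 \<le> r" "1 \<le> n" "(r - 1) * p < n * q" "(n - 1) * q < r * p"
  shows "(a * q + r - 1) * p < (a * p + n) * q" "(a * p + n - 1) * q < (a * q + r) * p"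
proof -
  obtain r' n' where "r = Suc r'" "n = Suc n'" using assms(1,2) by (cases r; cases n) auto
  then show "(a * q + r - 1) * p < (a * p + n) * q" "(a * p + n - 1) * q < (a * q + r) * p"
    using assms(3,4) by (simp_all add: algebra_simps)
qed

definition periodic_roster :: "nat \<Rightarrow> (nat \<Rightarrow> 'c \<times> nat) \<Rightarrow> nat \<Rightarrow> 'c" where
  "periodic_roster Q g k = fst (g (phase Q k))"

text \<open>The n-th slot of category j in period a (counting from 0) is its (a P_j + n)-th
  occurrence in the periodic roster.\<close>

definition occurrence_index :: "nat \<Rightarrow> ('c \<Rightarrow> nat) \<Rightarrow> (nat \<Rightarrow> 'c \<times> nat) \<Rightarrow> nat \<Rightarrow> nat" where
  "occurrence_index Q P g k = (k - 1) div Q * P (periodic_roster Q g k) + snd (g (phase Q k))"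

definition admissible :: "nat \<Rightarrow> ('c \<Rightarrow> nat) \<Rightarrow> (nat \<Rightarrow> 'c \<times> nat) \<Rightarrow> bool" where
  "admissible Q P g \<longleftrightarrow> bij_betw g {1..Q} (slots P) \<and> (\<forall>k\<in>{1..Q}. 0 < overlap Q P (g k) k)"

lemma admissible_in_set_pmf:
  assumes "\<forall>g\<in>set_pmf p. bij_betw g {1..Q} (slots P)"
    and "has_marginals p (slots P) {1..Q} (overlap Q P)" and "g \<in> set_pmf p"
  shows "admissible Q P g"
proof -
  have "bij_betw g {1..Q} (slots P)" using assms(1,3) by blast
  then show ?thesis
    unfolding admissible_def using has_marginals_pos[OF assms(2,3)] by (simp add: bij_betw_apply)
qed

lemma admissible_phase_slot:
  assumes "0 < Q" "admissible Q P g"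
  obtains n where "g (phase Q k) = (periodic_roster Q g k, n)" "n \<in> {1..P (periodic_roster Q g k)}"
    "cell (P (periodic_roster Q g k)) (phase Q k) \<inter> cell Q n \<noteq> {}"
proof -
  have r: "phase Q k \<in> {1..Q}" using assms(1) by (rule phase_in_period)
  obtain j n where jn: "g (phase Q k) = (j, n)" by fastforce
  have "(j, n) \<in> slots P"
    using assms(2) r jn unfolding admissible_def bij_betw_def by (metis image_eqI)
  moreover have "0 < overlap Q P (j, n) (phase Q k)"
    using assms(2) r jn unfolding admissible_def by metis
  then have "cell (P j) (phase Q k) \<inter> cell Q n \<noteq> {}" by (auto simp: overlap_def)
  ultimately show ?thesis
    using that[of n] jn by (auto simp: periodic_roster_def slots_def)
qed

lemma occurrence_index_window:
  assumes "0 < Q" "admissible Q P g" "1 \<le> k"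
  shows "1 \<le> occurrence_index Q P g k"
    "(k - 1) * P (periodic_roster Q g k) < occurrence_index Q P g k * Q"
    "(occurrence_index Q P g k - 1) * Q < k * P (periodic_roster Q g k)"
proof -
  obtain n where n: "g (phase Q k) = (periodic_roster Q g k, n)"
      "n \<in> {1..P (periodic_roster Q g k)}"
      "cell (P (periodic_roster Q g k)) (phase Q k) \<inter> cell Q n \<noteq> {}"
    using admissible_phase_slot[OF assms(1,2)] by blast
  define a where "a = (k - 1) div Q"
  have k: "k = a * Q + phase Q k" unfolding a_def using assms(3) by (rule phase_decomp)
  have N: "occurrence_index Q P g k = a * P (periodic_roster Q g k) + n"
    using n(1) by (simp add: occurrence_index_def a_def)
  have "1 \<le> phase Q k" using phase_in_period[OF assms(1)] by simp
  moreover have "1 \<le> n" using n(2) by simp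
  moreover note cell_Int_nonempty[OF n(3)]
  ultimately have "(a * Q + phase Q k - 1) * P (periodic_roster Q g k)
        < (a * P (periodic_roster Q g k) + n) * Q"
      "(a * P (periodic_roster Q g k) + n - 1) * Q
        < (a * Q + phase Q k) * P (periodic_roster Q g k)"
    by (blast intro: period_shift_window)+
  then show "(k - 1) * P (periodic_roster Q g k) < occurrence_index Q P g k * Q"
    "(occurrence_index Q P g k - 1) * Q < k * P (periodic_roster Q g k)"
    unfolding N by (simp_all only: k[symmetric])
  show "1 \<le> occurrence_index Q P g k" using N \<open>1 \<le> n\<close> by simp
qed

lemma occurrence_index_inj:
  assumes "0 < Q" "admissible Q P g"
  shows "inj_on (occurrence_index Q P g) {k. 1 \<le> k \<and> periodic_roster Q g k = j}"
proof (rule inj_onI)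
  fix k k'
  assume k: "k \<in> {k. 1 \<le> k \<and> periodic_roster Q g k = j}"
    and k': "k' \<in> {k. 1 \<le> k \<and> periodic_roster Q g k = j}"
    and eq: "occurrence_index Q P g k = occurrence_index Q P g k'"
  obtain n where n: "g (phase Q k) = (j, n)" "n \<in> {1..P j}"
    using admissible_phase_slot[OF assms, of k] k by auto
  obtain n' where n': "g (phase Q k') = (j, n')" "n' \<in> {1..P j}"
    using admissible_phase_slot[OF assms, of k'] k' by auto
  have N: "occurrence_index Q P g k = (k - 1) div Q * P j + n"
    "occurrence_index Q P g k' = (k' - 1) div Q * P j + n'"
    using k k' n n' by (simp_all add: occurrence_index_def)
  \<comment> \<open>Both occurrence indices decompose uniquely into a period and a slot of category j.\<close>
  have "n = n'" "(k - 1) div Q = (k' - 1) div Q"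
    using phase_shift[OF n(2)] phase_shift[OF n'(2)] eq unfolding N by metis+
  then have "g (phase Q k) = g (phase Q k')" using n n' by simp
  then have "phase Q k = phase Q k'"
    using assms phase_in_period unfolding admissible_def bij_betw_def by (metis inj_onD)
  then show "k = k'"
    using phase_decomp[of k Q] phase_decomp[of k' Q] k k' \<open>(k - 1) div Q = (k' - 1) div Q\<close>
    by simp
qed

lemma occurrence_index_surj:
  assumes "0 < Q" "admissible Q P g" "0 < P j" "1 \<le> N"
  shows "\<exists>k. 1 \<le> k \<and> periodic_roster Q g k = j \<and> occurrence_index Q P g k = N"
proof -
  have "(j, phase (P j) N) \<in> slots P"
    using phase_in_period[OF assms(3)] by (simp add: slots_def)
  then obtain r where r: "r \<in> {1..Q}" "g r = (j, phase (P j) N)"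
    using assms(2) unfolding admissible_def bij_betw_def by (metis imageE)
  define k where "k = (N - 1) div P j * Q + r"
  have k: "phase Q k = r" "(k - 1) div Q = (N - 1) div P j"
    unfolding k_def using phase_shift[OF r(1)] by simp_all
  have "1 \<le> k" using r(1) by (simp add: k_def)
  moreover have roster: "periodic_roster Q g k = j" using k r(2) by (simp add: periodic_roster_def)
  moreover have "occurrence_index Q P g k = N"
    using roster k r(2) phase_decomp[OF assms(4), of "P j"] by (simp add: occurrence_index_def)
  ultimately show ?thesis by blast
qed

lemma roster_count_le_ceiling:
  fixes \<sigma> :: "nat \<Rightarrow> 'c" and G :: "nat \<Rightarrow> nat"
  assumes q: "0 < q" and inj: "inj_on G {k. 1 \<le> k \<and> \<sigma> k = j}"
    and late: "\<And>k. 1 \<le> k \<Longrightarrow> \<sigma> k = j \<Longrightarrow> 1 \<le> G k \<and> (G k - 1) * q < k * p"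
  shows "int (roster_count \<sigma> j l) \<le> \<lceil>real l * (real p / real q)\<rceil>"
proof -
  define x where "x = real l * (real p / real q)"
  define C where "C = {k \<in> {1..l}. \<sigma> k = j}"
  have "C \<subseteq> {k. 1 \<le> k \<and> \<sigma> k = j}" by (auto simp: C_def)
  then have "roster_count \<sigma> j l = card (G ` C)"
    using card_image[OF inj_on_subset[OF inj]] by (simp add: roster_count_def C_def)
  moreover have "G ` C \<subseteq> {1..nat \<lceil>x\<rceil>}"
  proof
    fix N assume "N \<in> G ` C"
    then obtain k where k: "1 \<le> k" "k \<le> l" "\<sigma> k = j" "N = G k" by (auto simp: C_def)
    then have "1 \<le> N" "(N - 1) * q < l * p"
      using late[OF k(1,3)] by (auto intro: less_le_trans)
    then have "real (N - 1) * real q < real l * real p" by (metis of_nat_less_iff of_nat_mult)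
    then have "real N - 1 < x" using q \<open>1 \<le> N\<close> by (simp add: x_def field_simps)
    then have "int N \<le> \<lceil>x\<rceil>" by (simp add: le_ceiling_iff)
    then show "N \<in> {1..nat \<lceil>x\<rceil>}" using \<open>1 \<le> N\<close> by simp
  qed
  then have "card (G ` C) \<le> nat \<lceil>x\<rceil>" using card_mono[of "{1..nat \<lceil>x\<rceil>}"] by simp
  moreover have "0 \<le> \<lceil>x\<rceil>"
    unfolding le_ceiling_iff x_def by (simp add: less_le_trans[OF _ divide_nonneg_nonneg])
  ultimately show ?thesis unfolding x_def by linarith
qed

lemma floor_le_roster_count:
  fixes \<sigma> :: "nat \<Rightarrow> 'c" and G :: "nat \<Rightarrow> nat"
  assumes q: "0 < q"
    and surj: "\<And>N. 1 \<le> N \<Longrightarrow> \<exists>k. 1 \<le> k \<and> \<sigma> k = j \<and> G k = N"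
    and early: "\<And>k. 1 \<le> k \<Longrightarrow> \<sigma> k = j \<Longrightarrow> (k - 1) * p < G k * q"
  shows "\<lfloor>real l * (real p / real q)\<rfloor> \<le> int (roster_count \<sigma> j l)"
proof -
  define x where "x = real l * (real p / real q)"
  define C where "C = {k \<in> {1..l}. \<sigma> k = j}"
  have "{1..nat \<lfloor>x\<rfloor>} \<subseteq> G ` C"
  proof
    fix N assume N: "N \<in> {1..nat \<lfloor>x\<rfloor>}"
    then obtain k where k: "1 \<le> k" "\<sigma> k = j" "G k = N" using surj by auto
    have "int N \<le> \<lfloor>x\<rfloor>" using N by (simp add: x_def le_nat_iff)
    then have "real N \<le> x" by (simp add: le_floor_iff)
    then have "N * q \<le> l * p" using q by (simp add: x_def field_simps flip: of_nat_mult)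
    moreover have "(k - 1) * p < N * q" using early[OF k(1,2)] k(3) by simp
    ultimately have "(k - 1) * p < l * p" by linarith
    then have "k \<in> C" using k(1,2) by (auto simp: C_def)
    then show "N \<in> G ` C" using k(3) by blast
  qed
  then have "nat \<lfloor>x\<rfloor> \<le> card (G ` C)"
    using card_mono[of "G ` C" "{1..nat \<lfloor>x\<rfloor>}"] by (simp add: C_def)
  also have "\<dots> \<le> roster_count \<sigma> j l"
    unfolding roster_count_def C_def by (simp add: card_image_le)
  finally show ?thesis unfolding x_def by linarith
qed

lemma periodic_roster_within_quota:
  assumes "0 < Q" "admissible Q P g" "0 < P j"
  shows "\<lfloor>real l * (real (P j) / real Q)\<rfloor> \<le> int (roster_count (periodic_roster Q g) j l)"
    "int (roster_count (periodic_roster Q g) j l) \<le> \<lceil>real l * (real (P j) / real Q)\<rceil>"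
proof -
  have "(k - 1) * P j < occurrence_index Q P g k * Q \<and> (occurrence_index Q P g k - 1) * Q < k * P j"
    if "1 \<le> k" "periodic_roster Q g k = j" for k
    using occurrence_index_window(2,3)[OF assms(1,2) that(1)] that(2) by simp
  then show "\<lfloor>real l * (real (P j) / real Q)\<rfloor> \<le> int (roster_count (periodic_roster Q g) j l)"
    "int (roster_count (periodic_roster Q g) j l) \<le> \<lceil>real l * (real (P j) / real Q)\<rceil>"
    using floor_le_roster_count[OF assms(1) occurrence_index_surj[OF assms]]
      roster_count_le_ceiling[OF assms(1) occurrence_index_inj[OF assms(1,2)]]
      occurrence_index_window(1)[OF assms(1,2)] by blast+
qed

section \<open>Laws of random rosters\<close>

lemma roster_count_eq_sum: "real (roster_count \<sigma> j l) = (\<Sum>k\<in>{1..l}. if \<sigma> k = j then 1 else 0)"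
proof -
  have "{k \<in> {1..l}. \<sigma> k = j} = {1..l} \<inter> {k. \<sigma> k = j}" by auto
  then show ?thesis
    unfolding roster_count_def using sum_indicator_eq_card[of "{1..l}" "{k. \<sigma> k = j}"]
    by (simp add: sum.If_cases)
qed

lemma measurable_roster_count:
  "(\<lambda>\<sigma>. real (roster_count \<sigma> j l)) \<in> borel_measurable (PiM UNIV (\<lambda>_. count_space UNIV))"
  unfolding roster_count_eq_sum by measurable

lemma pred_within_quota:
  fixes \<alpha> :: "'c::finite \<Rightarrow> real"
  shows "Measurable.pred (PiM UNIV (\<lambda>_. count_space UNIV)) (\<lambda>\<sigma>. \<forall>l\<ge>1. \<forall>j.
     \<lfloor>real l * \<alpha> j\<rfloor> \<le> int (roster_count \<sigma> j l) \<and>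
     int (roster_count \<sigma> j l) \<le> \<lceil>real l * \<alpha> j\<rceil>)"
proof -
  have e: "(\<lfloor>real l * \<alpha> j\<rfloor> \<le> int (roster_count \<sigma> j l) \<and>
      int (roster_count \<sigma> j l) \<le> \<lceil>real l * \<alpha> j\<rceil>) \<longleftrightarrow>
    (real_of_int \<lfloor>real l * \<alpha> j\<rfloor> \<le> real (roster_count \<sigma> j l) \<and>
      real (roster_count \<sigma> j l) \<le> real_of_int \<lceil>real l * \<alpha> j\<rceil>)" for \<sigma> l j
    by (metis of_int_le_iff of_int_of_nat_eq)
  show ?thesis unfolding e using measurable_roster_count by measurable
qed

definition roster_law :: "'a pmf \<Rightarrow> ('a \<Rightarrow> nat \<Rightarrow> 'c) \<Rightarrow> (nat \<Rightarrow> 'c) measure" where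
  "roster_law p f = distr (measure_pmf p) (PiM UNIV (\<lambda>_. count_space UNIV)) f"

lemma measurable_pmf_roster: "f \<in> measure_pmf p \<rightarrow>\<^sub>M PiM UNIV (\<lambda>_. count_space UNIV)"
  by (simp add: space_PiM)

lemma random_roster_roster_law: "random_roster (roster_law p f)"
  unfolding random_roster_def roster_law_def
  using measure_pmf.prob_space_distr[OF measurable_pmf_roster] by simp

lemma AE_roster_law_within_quota:
  fixes \<alpha> :: "'c::finite \<Rightarrow> real" and f :: "'a \<Rightarrow> nat \<Rightarrow> 'c"
  assumes "\<And>g l j. g \<in> set_pmf p \<Longrightarrow> 1 \<le> l \<Longrightarrow>
    \<lfloor>real l * \<alpha> j\<rfloor> \<le> int (roster_count (f g) j l) \<and>
    int (roster_count (f g) j l) \<le> \<lceil>real l * \<alpha> j\<rceil>"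
  shows "AE \<sigma> in roster_law p f. \<forall>l\<ge>1. \<forall>j.
    \<lfloor>real l * \<alpha> j\<rfloor> \<le> int (roster_count \<sigma> j l) \<and>
    int (roster_count \<sigma> j l) \<le> \<lceil>real l * \<alpha> j\<rceil>"
  unfolding roster_law_def
proof (subst AE_distr_iff[OF measurable_pmf_roster])
  show "{\<sigma> \<in> space (PiM UNIV (\<lambda>_. count_space UNIV)). \<forall>l\<ge>1. \<forall>j.
      \<lfloor>real l * \<alpha> j\<rfloor> \<le> int (roster_count \<sigma> j l) \<and>
      int (roster_count \<sigma> j l) \<le> \<lceil>real l * \<alpha> j\<rceil>} \<in> sets (PiM UNIV (\<lambda>_. count_space UNIV))"
    using pred_within_quota[of \<alpha>] unfolding pred_def .
  show "AE g in measure_pmf p. \<forall>l\<ge>1. \<forall>j.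
      \<lfloor>real l * \<alpha> j\<rfloor> \<le> int (roster_count (f g) j l) \<and>
      int (roster_count (f g) j l) \<le> \<lceil>real l * \<alpha> j\<rceil>"
    unfolding AE_measure_pmf_iff using assms by blast
qed

lemma integral_roster_count_roster_law:
  "(\<integral>\<sigma>. real (roster_count \<sigma> j l) \<partial>roster_law p f)
     = (\<Sum>k\<in>{1..l}. measure_pmf.prob p {g. f g k = j})"
proof -
  have "(\<integral>\<sigma>. real (roster_count \<sigma> j l) \<partial>roster_law p f)
      = (\<integral>g. real (roster_count (f g) j l) \<partial>measure_pmf p)"
    unfolding roster_law_def by (rule integral_distr[OF measurable_pmf_roster measurable_roster_count])
  also have "\<dots> = (\<integral>g. (\<Sum>k\<in>{1..l}. indicator {g. f g k = j} g) \<partial>measure_pmf p)"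
    unfolding roster_count_eq_sum by (simp only: indicator_def mem_Collect_eq of_bool_def)
  also have "\<dots> = (\<Sum>k\<in>{1..l}. \<integral>g. indicator {g. f g k = j} g \<partial>measure_pmf p)"
    by (intro Bochner_Integration.integral_sum measure_pmf.integrable_const_bound[where B = 1]) auto
  also have "\<dots> = (\<Sum>k\<in>{1..l}. measure_pmf.prob p {g. f g k = j})" by simp
  finally show ?thesis .
qed

theorem mainTheorem6:
  fixes \<alpha> :: "'c::finite \<Rightarrow> real"
  assumes "CARD('c) \<ge> 2"
    and "\<And>j. \<alpha> j \<in> \<rat>"
    and "\<And>j. 0 < \<alpha> j \<and> \<alpha> j < 1"
    and "(\<Sum>j\<in>UNIV. \<alpha> j) = 1"
  shows "\<exists>M. unbiased_within_quota \<alpha> M"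
proof -
  obtain Q P where Q: "0 < Q" and P: "\<And>j. 0 < P j" and \<alpha>: "\<And>j. \<alpha> j = real (P j) / real Q"
    using rational_weights_common_denominator[of \<alpha>] assms(2,3) by blast
  have "real (\<Sum>j\<in>UNIV. P j) = real Q"
    using assms(4) Q by (simp add: \<alpha> flip: sum_divide_distrib)
  then have "doubly_stochastic (slots P) {1..Q} (overlap Q P)"
    by (intro doubly_stochastic_overlap Q) (simp only: of_nat_eq_iff)
  then obtain p where p: "\<forall>g\<in>set_pmf p. bij_betw g {1..Q} (slots P)"
      "has_marginals p (slots P) {1..Q} (overlap Q P)"
    using birkhoff_random_bij[OF finite_slots finite_atLeastAtMost] by blast
  have admissible: "admissible Q P g" if "g \<in> set_pmf p" for g
    using p that by (rule admissible_in_set_pmf)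
  have "AE \<sigma> in roster_law p (periodic_roster Q). \<forall>l\<ge>1. \<forall>j.
      \<lfloor>real l * \<alpha> j\<rfloor> \<le> int (roster_count \<sigma> j l) \<and> int (roster_count \<sigma> j l) \<le> \<lceil>real l * \<alpha> j\<rceil>"
    using periodic_roster_within_quota[OF Q admissible P] by (intro AE_roster_law_within_quota) (simp add: \<alpha>)
  moreover have "(\<integral>\<sigma>. real (roster_count \<sigma> j l) \<partial>roster_law p (periodic_roster Q)) = real l * \<alpha> j"
    for j l
    using has_marginals_overlap_category[OF p(2) phase_in_period[OF Q]]
    by (simp add: integral_roster_count_roster_law periodic_roster_def \<alpha>)
  ultimately show ?thesis
    unfolding unbiased_within_quota_def using random_roster_roster_law by blast
qed

end
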